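(* The graph $\{(x_1,\dots,x_n,y)\in\mathbb R^{n+1}: y=x_1^2+\cdots+x_n^2\}$ (with the metric induced from $\mathbb R^{n+1}$) is $\Phi$-SSU if and only if $n>4$.
   Context: A Riemannian $n$-manifold $N$ is $\Phi$-SSU if there is an isometric immersion $N\to\mathbb R^q$ with second fundamental form $\mathsf B$ such that for every $y\in N$ and every unit $\mathsf x\in T_yN$, $\sum_{\beta=1}^n\big(4|\mathsf B(\mathsf x,\mathsf e_\beta)|^2-\langle \mathsf B(\mathsf x,\mathsf x),\mathsf B(\mathsf e_\beta,\mathsf e_\beta)\rangle\big)<0$, where $\{\mathsf e_\beta\}$ is an orthonormal basis of $T_yN$. *)

theory Defs
  imports "HOL-Analysis.Analysis"
begin

text \<open>Manifolds with a global chart R^n. A Riemannian metric in the chart is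
  g x v w (inner product of tangent vectors v w at the point with coordinates x).
  An isometric immersion into R^q is given in coordinates by q smooth component
  functions F 0, ..., F (q-1) on R^n.\<close>

definition dderiv :: "(real^'n \<Rightarrow> real) \<Rightarrow> real^'n \<Rightarrow> real^'n \<Rightarrow> real" where
  "dderiv f v x = frechet_derivative f (at x) v"

definition smooth_fn :: "(real^'n \<Rightarrow> real) \<Rightarrow> bool" where
  "smooth_fn f \<longleftrightarrow> (\<forall>vs x. (foldr (\<lambda>v h. dderiv h v) vs f) differentiable (at x))"

text \<open>Vectors of R^q are represented as functions nat => real (only indices < q matter).\<close>
definition ipq :: "nat \<Rightarrow> (nat \<Rightarrow> real) \<Rightarrow> (nat \<Rightarrow> real) \<Rightarrow> real" where
  "ipq q a b = (\<Sum>k<q. a k * b k)"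

definition DF :: "(nat \<Rightarrow> real^'n \<Rightarrow> real) \<Rightarrow> real^'n \<Rightarrow> real^'n \<Rightarrow> nat \<Rightarrow> real" where
  "DF F x v = (\<lambda>k. dderiv (F k) v x)"

definition D2F :: "(nat \<Rightarrow> real^'n \<Rightarrow> real) \<Rightarrow> real^'n \<Rightarrow> real^'n \<Rightarrow> real^'n \<Rightarrow> nat \<Rightarrow> real" where
  "D2F F x v w = (\<lambda>k. dderiv (dderiv (F k) v) w x)"

definition isometric_immersion ::
  "(real^'n \<Rightarrow> real^'n \<Rightarrow> real^'n \<Rightarrow> real) \<Rightarrow> nat \<Rightarrow> (nat \<Rightarrow> real^'n \<Rightarrow> real) \<Rightarrow> bool" where
  "isometric_immersion g q F \<longleftrightarrow>
     (\<forall>k<q. smooth_fn (F k)) \<and> (\<forall>x v w. ipq q (DF F x v) (DF F x w) = g x v w)"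

text \<open>Second fundamental form: normal component (w.r.t. the tangent space spanned by
  the DF x z) of the second derivative D2F x v w.\<close>
definition sff :: "nat \<Rightarrow> (nat \<Rightarrow> real^'n \<Rightarrow> real) \<Rightarrow> real^'n \<Rightarrow> real^'n \<Rightarrow> real^'n \<Rightarrow> nat \<Rightarrow> real" where
  "sff q F x v w = (THE b. (\<forall>k\<ge>q. b k = 0) \<and> (\<forall>z. ipq q b (DF F x z) = 0) \<and>
       (\<exists>z. \<forall>k<q. D2F F x v w k = DF F x z k + b k))"

definition orthonormal_frame ::
  "(real^'n \<Rightarrow> real^'n \<Rightarrow> real^'n \<Rightarrow> real) \<Rightarrow> real^'n \<Rightarrow> ('n \<Rightarrow> real^'n) \<Rightarrow> bool" where
  "orthonormal_frame g x e \<longleftrightarrow> (\<forall>i j. g x (e i) (e j) = (if i = j then 1 else 0))"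

definition Phi_SSU :: "(real^'n \<Rightarrow> real^'n \<Rightarrow> real^'n \<Rightarrow> real) \<Rightarrow> bool" where
  "Phi_SSU g \<longleftrightarrow> (\<exists>q F. isometric_immersion g q F \<and>
     (\<forall>x v e. g x v v = 1 \<longrightarrow> orthonormal_frame g x e \<longrightarrow>
        (\<Sum>\<beta>\<in>UNIV. 4 * ipq q (sff q F x v (e \<beta>)) (sff q F x v (e \<beta>))
                 - ipq q (sff q F x v v) (sff q F x (e \<beta>) (e \<beta>))) < 0))"

text \<open>Metric induced on the graph y = |x|^2 via the chart x \<mapsto> (x, |x|^2).\<close>
definition paraboloid_metric :: "real^'n \<Rightarrow> real^'n \<Rightarrow> real^'n \<Rightarrow> real" where
  "paraboloid_metric x v w = v \<bullet> w + 4 * (x \<bullet> v) * (x \<bullet> w)"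

end

theory Submission
  imports Defs
begin

text \<open>Summing the \<open>\<Phi>\<close>-SSU inequality over the vectors of an orthonormal frame at one point gives
  \<open>\<Sum>\<^sub>k (4 |b\<^sup>k|\<^sup>2 - (tr b\<^sup>k)\<^sup>2) < 0\<close> for the normal components \<open>b\<^sup>k\<close> of the second
  fundamental form; since \<open>(tr b)\<^sup>2 \<le> n |b|\<^sup>2\<close>, this is impossible for \<open>n \<le> 4\<close>, whatever the
  manifold. Conversely, for the graph in \<open>\<real>\<^bsup>n+1\<^esup>\<close> the second fundamental form is
  \<open>B(v,w) = 2 \<langle>v,w\<rangle> \<nu> / (1 + 4|x|\<^sup>2)\<close> with \<open>\<nu> = (-2x, 1)\<close>, so the \<open>\<Phi>\<close>-SSU sum is a positive multiple
  of \<open>4 \<Sum>\<^sub>\<beta> \<langle>v,e\<^sub>\<beta>\<rangle>\<^sup>2 - |v|\<^sup>2 \<Sum>\<^sub>\<beta> |e\<^sub>\<beta>|\<^sup>2\<close> (Euclidean norms). Bessel's inequality for the induced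
  metric bounds the first sum by \<open>|v|\<^sup>2\<close> and shows \<open>\<Sum>\<^sub>\<beta> |e\<^sub>\<beta>|\<^sup>2 > n - 1 \<ge> 4\<close> when \<open>n > 4\<close>.\<close>

lemma trace_square_le_card_mult_sum_squares:
  fixes b :: "'a::finite \<Rightarrow> 'a \<Rightarrow> real"
  shows "(\<Sum>\<alpha>\<in>UNIV. b \<alpha> \<alpha>)\<^sup>2 \<le> real CARD('a) * (\<Sum>\<alpha>\<in>UNIV. \<Sum>\<beta>\<in>UNIV. (b \<alpha> \<beta>)\<^sup>2)"
proof -
  have "(\<Sum>\<alpha>\<in>UNIV. b \<alpha> \<alpha>)\<^sup>2 \<le> (\<Sum>\<alpha>\<in>UNIV. (b \<alpha> \<alpha>)\<^sup>2) * CARD('a)"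
    by (rule sum_squared_le_sum_of_squares)
  also have "\<dots> \<le> (\<Sum>\<alpha>\<in>UNIV. \<Sum>\<beta>\<in>UNIV. (b \<alpha> \<beta>)\<^sup>2) * CARD('a)"
    by (intro mult_right_mono sum_mono member_le_sum) auto
  finally show ?thesis by (simp add: mult.commute)
qed

lemma SSU_sum_over_frame_nonneg:
  fixes b :: "'a::finite \<Rightarrow> 'a \<Rightarrow> nat \<Rightarrow> real"
  assumes "CARD('a) \<le> 4"
  shows "0 \<le> (\<Sum>\<alpha>\<in>UNIV. \<Sum>\<beta>\<in>UNIV. 4 * ipq q (b \<alpha> \<beta>) (b \<alpha> \<beta>) - ipq q (b \<alpha> \<alpha>) (b \<beta> \<beta>))"
proof -
  have trace_square: "(\<Sum>\<alpha>\<in>UNIV. b \<alpha> \<alpha> k)\<^sup>2 = (\<Sum>\<alpha>\<in>UNIV. \<Sum>\<beta>\<in>UNIV. b \<alpha> \<alpha> k * b \<beta> \<beta> k)" for k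
    by (simp add: power2_eq_square sum_product)
  have "(\<Sum>\<alpha>\<in>UNIV. \<Sum>\<beta>\<in>UNIV. 4 * ipq q (b \<alpha> \<beta>) (b \<alpha> \<beta>) - ipq q (b \<alpha> \<alpha>) (b \<beta> \<beta>))
      = (\<Sum>\<alpha>\<in>UNIV. \<Sum>\<beta>\<in>UNIV. \<Sum>k<q. 4 * (b \<alpha> \<beta> k)\<^sup>2 - b \<alpha> \<alpha> k * b \<beta> \<beta> k)"
    by (simp add: ipq_def power2_eq_square sum_subtractf sum_distrib_left)
  also have "\<dots> = (\<Sum>k<q. \<Sum>\<alpha>\<in>UNIV. \<Sum>\<beta>\<in>UNIV. 4 * (b \<alpha> \<beta> k)\<^sup>2 - b \<alpha> \<alpha> k * b \<beta> \<beta> k)"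
    by (simp only: sum.swap[of _ "UNIV :: 'a set" "{..<q}"])
  also have "\<dots> = (\<Sum>k<q. 4 * (\<Sum>\<alpha>\<in>UNIV. \<Sum>\<beta>\<in>UNIV. (b \<alpha> \<beta> k)\<^sup>2) - (\<Sum>\<alpha>\<in>UNIV. b \<alpha> \<alpha> k)\<^sup>2)"
    by (simp add: sum_subtractf sum_distrib_left trace_square)
  also have "\<dots> \<ge> 0"
  proof (rule sum_nonneg)
    fix k
    have "(\<Sum>\<alpha>\<in>UNIV. b \<alpha> \<alpha> k)\<^sup>2 \<le> real CARD('a) * (\<Sum>\<alpha>\<in>UNIV. \<Sum>\<beta>\<in>UNIV. (b \<alpha> \<beta> k)\<^sup>2)"
      by (rule trace_square_le_card_mult_sum_squares)
    also have "\<dots> \<le> 4 * (\<Sum>\<alpha>\<in>UNIV. \<Sum>\<beta>\<in>UNIV. (b \<alpha> \<beta> k)\<^sup>2)"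
      using assms by (intro mult_right_mono sum_nonneg) auto
    finally show "0 \<le> 4 * (\<Sum>\<alpha>\<in>UNIV. \<Sum>\<beta>\<in>UNIV. (b \<alpha> \<beta> k)\<^sup>2) - (\<Sum>\<alpha>\<in>UNIV. b \<alpha> \<alpha> k)\<^sup>2"
      by simp
  qed
  finally show ?thesis .
qed

lemma Phi_SSU_imp_card_gt_4:
  fixes g :: "real^'n \<Rightarrow> real^'n \<Rightarrow> real^'n \<Rightarrow> real"
  assumes "Phi_SSU g" and frame: "orthonormal_frame g x e"
  shows "CARD('n) > 4"
proof (rule ccontr)
  assume "\<not> CARD('n) > 4"
  from assms(1) obtain q F where SSU: "\<And>v. g x v v = 1 \<Longrightarrow>
      (\<Sum>\<beta>\<in>UNIV. 4 * ipq q (sff q F x v (e \<beta>)) (sff q F x v (e \<beta>))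
                 - ipq q (sff q F x v v) (sff q F x (e \<beta>) (e \<beta>))) < 0"
    using frame unfolding Phi_SSU_def by blast
  define b where "b \<alpha> \<beta> = sff q F x (e \<alpha>) (e \<beta>)" for \<alpha> \<beta>
  have "(\<Sum>\<beta>\<in>UNIV. 4 * ipq q (b \<alpha> \<beta>) (b \<alpha> \<beta>) - ipq q (b \<alpha> \<alpha>) (b \<beta> \<beta>)) < 0" for \<alpha>
    unfolding b_def by (rule SSU) (use frame in \<open>simp add: orthonormal_frame_def\<close>)
  then have "(\<Sum>\<alpha>\<in>UNIV. \<Sum>\<beta>\<in>UNIV. 4 * ipq q (b \<alpha> \<beta>) (b \<alpha> \<beta>) - ipq q (b \<alpha> \<alpha>) (b \<beta> \<beta>))
      < (\<Sum>\<alpha>\<in>(UNIV::'n set). 0)"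
    by (intro sum_strict_mono) auto
  with SSU_sum_over_frame_nonneg[where b = b and q = q] \<open>\<not> CARD('n) > 4\<close> show False by simp
qed

lemma sff_eqI:
  assumes vanish: "\<And>k. k \<ge> q \<Longrightarrow> b k = 0"
    and normal: "\<And>z. ipq q b (DF F x z) = 0"
    and decomp: "\<And>k. k < q \<Longrightarrow> D2F F x v w k = DF F x z k + b k"
    and tangent_linear: "\<And>k. k < q \<Longrightarrow> linear (\<lambda>z. DF F x z k)"
  shows "sff q F x v w = b"
  unfolding sff_def
proof (rule the_equality)
  show "(\<forall>k\<ge>q. b k = 0) \<and> (\<forall>z. ipq q b (DF F x z) = 0) \<and>
      (\<exists>z. \<forall>k<q. D2F F x v w k = DF F x z k + b k)"
    using assms by blast
next
  fix b'
  assume "(\<forall>k\<ge>q. b' k = 0) \<and> (\<forall>z. ipq q b' (DF F x z) = 0) \<and>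
      (\<exists>z. \<forall>k<q. D2F F x v w k = DF F x z k + b' k)"
  then obtain z' where vanish': "\<And>k. k \<ge> q \<Longrightarrow> b' k = 0"
    and normal': "\<And>z. ipq q b' (DF F x z) = 0"
    and decomp': "\<And>k. k < q \<Longrightarrow> D2F F x v w k = DF F x z' k + b' k" by blast
  \<comment> \<open>\<open>b' - b\<close> is both tangent and normal, hence zero.\<close>
  have tangent: "b' k - b k = DF F x (z - z') k" if "k < q" for k
    using decomp[OF that] decomp'[OF that] linear_diff[OF tangent_linear[OF that]] by simp
  have "(\<Sum>k<q. (b' k - b k)\<^sup>2) = ipq q b' (DF F x (z - z')) - ipq q b (DF F x (z - z'))"
    unfolding ipq_def power2_eq_square sum_subtractf[symmetric]
    by (intro sum.cong) (auto simp: tangent[symmetric] left_diff_distrib)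
  also have "\<dots> = 0" using normal normal' by simp
  finally have "b' k = b k" if "k < q" for k
    using that by (subst (asm) sum_nonneg_eq_0_iff) auto
  with vanish vanish' show "b' = b" by (metis ext not_le)
qed

lemma bilinear_bessel_inequality:
  fixes B :: "'a::real_vector \<Rightarrow> 'a \<Rightarrow> real" and e :: "'i::finite \<Rightarrow> 'a"
  assumes B: "bilinear B" and sym: "\<And>u w. B u w = B w u" and psd: "\<And>u. 0 \<le> B u u"
    and orthonormal: "\<And>i j. B (e i) (e j) = (if i = j then 1 else 0)"
  shows "(\<Sum>i\<in>UNIV. (B u (e i))\<^sup>2) \<le> B u u"
proof -
  define p where "p = (\<Sum>i\<in>UNIV. B u (e i) *\<^sub>R e i)"
  have expand: "B p w = (\<Sum>i\<in>UNIV. B u (e i) * B (e i) w)" for w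
  proof -
    have lin: "linear (\<lambda>y. B y w)" using B by (simp add: bilinear_def)
    show ?thesis by (simp add: p_def linear_sum[OF lin] bilinear_lmul[OF B])
  qed
  have p_e: "B p (e j) = B u (e j)" for j
    by (simp add: expand orthonormal if_distrib cong: if_cong)
  have u_p: "B u p = (\<Sum>i\<in>UNIV. (B u (e i))\<^sup>2)"
    by (simp add: sym[of u p] expand power2_eq_square sym[of "e _" u])
  have p_p: "B p p = (\<Sum>i\<in>UNIV. (B u (e i))\<^sup>2)"
    unfolding expand[of p] by (simp add: sym[of "e _" p] p_e power2_eq_square)
  have "0 \<le> B (u - p) (u - p)" by (rule psd)
  also have "\<dots> = B u u - 2 * B u p + B p p"
    by (simp add: bilinear_lsub[OF B] bilinear_rsub[OF B] sym[of p u])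
  finally show ?thesis by (simp add: u_p p_p)
qed

definition quadratic_fn :: "real \<Rightarrow> real^'n \<Rightarrow> real \<Rightarrow> real^'n \<Rightarrow> real" where
  "quadratic_fn c b d y = c + b \<bullet> y + d * (y \<bullet> y)"

lemma has_derivative_quadratic_fn:
  "(quadratic_fn c b d has_derivative (\<lambda>v. b \<bullet> v + 2 * d * (y \<bullet> v))) (at y)"
proof -
  have "((\<lambda>y. c + b \<bullet> y + d * (y \<bullet> y)) has_derivative (\<lambda>v. 0 + b \<bullet> v + d * (y \<bullet> v + v \<bullet> y))) (at y)"
    by (intro derivative_eq_intros) auto
  then show ?thesis
    by (simp add: quadratic_fn_def[abs_def] inner_commute algebra_simps)
qed

lemma dderiv_quadratic_fn: "dderiv (quadratic_fn c b d) v = quadratic_fn (b \<bullet> v) ((2 * d) *\<^sub>R v) 0"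
proof
  fix y
  have "frechet_derivative (quadratic_fn c b d) (at y) = (\<lambda>v. b \<bullet> v + 2 * d * (y \<bullet> v))"
    by (rule frechet_derivative_at[OF has_derivative_quadratic_fn, symmetric])
  then show "dderiv (quadratic_fn c b d) v y = quadratic_fn (b \<bullet> v) ((2 * d) *\<^sub>R v) 0 y"
    by (simp add: dderiv_def quadratic_fn_def inner_commute)
qed

lemma smooth_quadratic_fn: "smooth_fn (quadratic_fn c b d)"
proof -
  have "\<exists>c' b' d'. foldr (\<lambda>v h. dderiv h v) vs (quadratic_fn c b d) = quadratic_fn c' b' d'" for vs
    by (induction vs) (auto simp: dderiv_quadratic_fn, blast)
  then show ?thesis
    unfolding smooth_fn_def differentiable_def by (metis has_derivative_quadratic_fn)
qed

text \<open>The graph chart \<open>x \<mapsto> (x, |x|\<^sup>2)\<close> as a map into \<open>\<real>\<^bsup>n+1\<^esup>\<close>: the coordinate \<open>x $ h k\<close>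
  sits in slot \<open>k < n\<close> for an enumeration \<open>h\<close> of the index type, the height in slot \<open>n\<close>.\<close>
definition paraboloid_immersion :: "(nat \<Rightarrow> 'n::finite) \<Rightarrow> nat \<Rightarrow> real^'n \<Rightarrow> real" where
  "paraboloid_immersion h k =
     (if k < CARD('n) then quadratic_fn 0 (axis (h k) 1) 0 else quadratic_fn 0 0 1)"

definition paraboloid_normal :: "(nat \<Rightarrow> 'n::finite) \<Rightarrow> real^'n \<Rightarrow> nat \<Rightarrow> real" where
  "paraboloid_normal h x k = (if k < CARD('n) then -2 * x $ h k else if k = CARD('n) then 1 else 0)"

lemma DF_paraboloid_immersion:
  "DF (paraboloid_immersion h) x v k = (if k < CARD('n) then v $ h k else 2 * (x \<bullet> v))"
  for h :: "nat \<Rightarrow> 'n::finite"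
  by (simp add: DF_def paraboloid_immersion_def dderiv_quadratic_fn quadratic_fn_def inner_axis
      inner_commute)

lemma D2F_paraboloid_immersion:
  "D2F (paraboloid_immersion h) x v w k = (if k < CARD('n) then 0 else 2 * (v \<bullet> w))"
  for h :: "nat \<Rightarrow> 'n::finite"
  by (simp add: D2F_def paraboloid_immersion_def dderiv_quadratic_fn quadratic_fn_def inner_commute)

lemma ipq_Suc: "ipq (Suc q) a b = ipq q a b + a q * b q"
  by (simp add: ipq_def)

lemma inner_vec_enumeration:
  fixes h :: "nat \<Rightarrow> 'n::finite"
  assumes "bij_betw h {..<CARD('n)} UNIV"
  shows "(\<Sum>k<CARD('n). a $ h k * b $ h k) = a \<bullet> b"
  using sum.reindex_bij_betw[OF assms, of "\<lambda>i. a $ i * b $ i"] by (simp add: inner_vec_def)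

context
  fixes h :: "nat \<Rightarrow> 'n::finite"
  assumes h: "bij_betw h {..<CARD('n)} UNIV"
begin

lemma isometric_paraboloid_immersion:
  "isometric_immersion paraboloid_metric (Suc CARD('n)) (paraboloid_immersion h)"
  unfolding isometric_immersion_def
proof (intro conjI allI impI)
  show "smooth_fn (paraboloid_immersion h k)" for k
    by (simp add: paraboloid_immersion_def smooth_quadratic_fn)
  show "ipq (Suc CARD('n)) (DF (paraboloid_immersion h) x v) (DF (paraboloid_immersion h) x w)
      = paraboloid_metric x v w" for x v w
    using inner_vec_enumeration[OF h, of v w]
    by (simp add: ipq_Suc ipq_def DF_paraboloid_immersion paraboloid_metric_def)
qed

lemma ipq_paraboloid_normal:
  "ipq (Suc CARD('n)) (\<lambda>k. a * paraboloid_normal h x k) (\<lambda>k. b * paraboloid_normal h x k)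
     = a * b * (1 + 4 * (x \<bullet> x))"
proof -
  have "ipq CARD('n) (\<lambda>k. a * paraboloid_normal h x k) (\<lambda>k. b * paraboloid_normal h x k)
      = 4 * a * b * (\<Sum>k<CARD('n). x $ h k * x $ h k)"
    by (simp add: ipq_def paraboloid_normal_def sum_distrib_left algebra_simps)
  then show ?thesis
    using inner_vec_enumeration[OF h, of x x] by (simp add: ipq_Suc paraboloid_normal_def algebra_simps)
qed

lemma paraboloid_normal_orthogonal:
  "ipq (Suc CARD('n)) (\<lambda>k. c * paraboloid_normal h x k) (DF (paraboloid_immersion h) x z) = 0"
proof -
  have "ipq CARD('n) (\<lambda>k. c * paraboloid_normal h x k) (DF (paraboloid_immersion h) x z)
      = -2 * c * (\<Sum>k<CARD('n). x $ h k * z $ h k)"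
    by (simp add: ipq_def paraboloid_normal_def DF_paraboloid_immersion sum_distrib_left algebra_simps)
  then show ?thesis
    using inner_vec_enumeration[OF h, of x z]
    by (simp add: ipq_Suc paraboloid_normal_def DF_paraboloid_immersion)
qed

lemma sff_paraboloid_immersion:
  "sff (Suc CARD('n)) (paraboloid_immersion h) x v w
     = (\<lambda>k. 2 * (v \<bullet> w) / (1 + 4 * (x \<bullet> x)) * paraboloid_normal h x k)"
proof -
  define c where "c = 2 * (v \<bullet> w) / (1 + 4 * (x \<bullet> x))"
  have c: "c * (1 + 4 * (x \<bullet> x)) = 2 * (v \<bullet> w)"
    by (simp add: c_def add_nonneg_eq_0_iff)
  have "sff (Suc CARD('n)) (paraboloid_immersion h) x v w = (\<lambda>k. c * paraboloid_normal h x k)"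
  proof (rule sff_eqI[where z = "(2 * c) *\<^sub>R x"])
    show "c * paraboloid_normal h x k = 0" if "Suc CARD('n) \<le> k" for k
      using that by (simp add: paraboloid_normal_def)
    show "ipq (Suc CARD('n)) (\<lambda>k. c * paraboloid_normal h x k) (DF (paraboloid_immersion h) x z) = 0"
      for z
      by (rule paraboloid_normal_orthogonal)
    show "D2F (paraboloid_immersion h) x v w k
        = DF (paraboloid_immersion h) x ((2 * c) *\<^sub>R x) k + c * paraboloid_normal h x k"
      if "k < Suc CARD('n)" for k
      using that c
      by (cases "k < CARD('n)")
        (simp_all add: D2F_paraboloid_immersion DF_paraboloid_immersion paraboloid_normal_def
          algebra_simps)
    show "linear (\<lambda>z. DF (paraboloid_immersion h) x z k)" for k
      by (simp add: DF_paraboloid_immersion linear_iff inner_add_right)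
  qed
  then show ?thesis by (simp add: c_def)
qed

lemma SSU_term_paraboloid_immersion:
  "4 * ipq (Suc CARD('n)) (sff (Suc CARD('n)) (paraboloid_immersion h) x v u)
         (sff (Suc CARD('n)) (paraboloid_immersion h) x v u)
     - ipq (Suc CARD('n)) (sff (Suc CARD('n)) (paraboloid_immersion h) x v v)
         (sff (Suc CARD('n)) (paraboloid_immersion h) x u u)
   = 4 / (1 + 4 * (x \<bullet> x)) * (4 * (v \<bullet> u)\<^sup>2 - (v \<bullet> v) * (u \<bullet> u))"
proof -
  define s where "s = 1 + 4 * (x \<bullet> x)"
  have "s > 0" by (simp add: s_def add_pos_nonneg)
  then show ?thesis
    unfolding sff_paraboloid_immersion ipq_paraboloid_normal s_def[symmetric]
    by (simp add: field_simps power2_eq_square)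
qed

end

lemma bilinear_paraboloid_metric: "bilinear (paraboloid_metric x)"
  by (simp add: bilinear_def linear_iff paraboloid_metric_def inner_add_left inner_add_right
      algebra_simps)

lemma paraboloid_metric_commute: "paraboloid_metric x v w = paraboloid_metric x w v"
  by (simp add: paraboloid_metric_def inner_commute)

lemma paraboloid_metric_nonneg: "0 \<le> paraboloid_metric x v v"
  by (simp add: paraboloid_metric_def)

lemma paraboloid_frame_inner_bound:
  fixes x w :: "real^'n"
  assumes frame: "orthonormal_frame paraboloid_metric x e"
  shows "(\<Sum>\<beta>\<in>UNIV. (w \<bullet> e \<beta>)\<^sup>2) \<le> w \<bullet> w - 4 * (x \<bullet> w)\<^sup>2 / (1 + 4 * (x \<bullet> x))"
proof -
  define s where "s = 1 + 4 * (x \<bullet> x)"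
  have "s > 0" by (simp add: s_def add_pos_nonneg)
  \<comment> \<open>\<open>u\<close> represents the Euclidean functional \<open>w \<bullet> _\<close> with respect to the induced metric.\<close>
  define u where "u = w - (4 * (x \<bullet> w) / s) *\<^sub>R x"
  have "x \<bullet> u = (x \<bullet> w) / s"
    using \<open>s > 0\<close> by (simp add: u_def s_def inner_diff_right field_simps)
  then have represents: "paraboloid_metric x u y = w \<bullet> y" for y
    unfolding paraboloid_metric_def by (simp add: u_def inner_diff_left)
  have "(\<Sum>\<beta>\<in>UNIV. (w \<bullet> e \<beta>)\<^sup>2) \<le> paraboloid_metric x u u"
    using bilinear_bessel_inequality[OF bilinear_paraboloid_metric paraboloid_metric_commute
        paraboloid_metric_nonneg, of x e u] frame
    by (simp add: orthonormal_frame_def represents)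
  also have "\<dots> = w \<bullet> w - 4 * (x \<bullet> w)\<^sup>2 / s"
    unfolding represents by (simp add: u_def inner_diff_right power2_eq_square inner_commute)
  finally show ?thesis by (simp add: s_def)
qed

lemma paraboloid_frame_sum_norms_gt:
  fixes x :: "real^'n"
  assumes frame: "orthonormal_frame paraboloid_metric x e"
  shows "(\<Sum>\<beta>\<in>UNIV. e \<beta> \<bullet> e \<beta>) > real CARD('n) - 1"
proof -
  define s where "s = 1 + 4 * (x \<bullet> x)"
  have "s > 0" by (simp add: s_def add_pos_nonneg)
  have unit: "e \<beta> \<bullet> e \<beta> = 1 - 4 * (x \<bullet> e \<beta>)\<^sup>2" for \<beta>
  proof -
    have "paraboloid_metric x (e \<beta>) (e \<beta>) = 1"
      using frame by (simp add: orthonormal_frame_def)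
    then show ?thesis by (simp add: paraboloid_metric_def power2_eq_square algebra_simps)
  qed
  have "x \<bullet> x - 4 * (x \<bullet> x)\<^sup>2 / s = (x \<bullet> x) / s"
    using \<open>s > 0\<close> by (simp add: s_def field_simps power2_eq_square)
  then have "(\<Sum>\<beta>\<in>UNIV. (x \<bullet> e \<beta>)\<^sup>2) \<le> (x \<bullet> x) / s"
    using paraboloid_frame_inner_bound[OF frame, of x] by (simp add: s_def)
  also have "\<dots> < 1 / 4"
    using \<open>s > 0\<close> by (simp add: s_def field_simps)
  finally show ?thesis
    by (simp add: unit sum_subtractf sum_distrib_left[symmetric])
qed

lemma paraboloid_frame_SSU_inequality:
  fixes x v :: "real^'n"
  assumes frame: "orthonormal_frame paraboloid_metric x e"
    and "v \<noteq> 0" and "CARD('n) > 4"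
  shows "4 * (\<Sum>\<beta>\<in>UNIV. (v \<bullet> e \<beta>)\<^sup>2) < (v \<bullet> v) * (\<Sum>\<beta>\<in>UNIV. e \<beta> \<bullet> e \<beta>)"
proof -
  have "0 \<le> 4 * (x \<bullet> v)\<^sup>2 / (1 + 4 * (x \<bullet> x))" by simp
  then have "(\<Sum>\<beta>\<in>UNIV. (v \<bullet> e \<beta>)\<^sup>2) \<le> v \<bullet> v"
    using paraboloid_frame_inner_bound[OF frame, of v] by linarith
  then have "4 * (\<Sum>\<beta>\<in>UNIV. (v \<bullet> e \<beta>)\<^sup>2) \<le> (v \<bullet> v) * 4" by simp
  also have "\<dots> < (v \<bullet> v) * (\<Sum>\<beta>\<in>UNIV. e \<beta> \<bullet> e \<beta>)"
    using paraboloid_frame_sum_norms_gt[OF frame] \<open>CARD('n) > 4\<close> \<open>v \<noteq> 0\<close> by simp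
  finally show ?thesis .
qed

lemma Phi_SSU_paraboloid_metric:
  assumes "CARD('n) > 4"
  shows "Phi_SSU (paraboloid_metric :: real^'n \<Rightarrow> real^'n \<Rightarrow> real^'n \<Rightarrow> real)"
proof -
  obtain h :: "nat \<Rightarrow> 'n" where h: "bij_betw h {..<CARD('n)} UNIV"
    using ex_bij_betw_nat_finite[of "UNIV :: 'n set"] by (auto simp: atLeast0LessThan)
  let ?q = "Suc CARD('n)" and ?F = "paraboloid_immersion h"
  have "(\<Sum>\<beta>\<in>UNIV. 4 * ipq ?q (sff ?q ?F x v (e \<beta>)) (sff ?q ?F x v (e \<beta>))
          - ipq ?q (sff ?q ?F x v v) (sff ?q ?F x (e \<beta>) (e \<beta>))) < 0"
    if unit: "paraboloid_metric x v v = 1" and frame: "orthonormal_frame paraboloid_metric x e"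
    for x v :: "real^'n" and e
  proof -
    have "v \<noteq> 0" using unit by (auto simp: paraboloid_metric_def)
    have "(\<Sum>\<beta>\<in>UNIV. 4 * ipq ?q (sff ?q ?F x v (e \<beta>)) (sff ?q ?F x v (e \<beta>))
          - ipq ?q (sff ?q ?F x v v) (sff ?q ?F x (e \<beta>) (e \<beta>)))
        = 4 / (1 + 4 * (x \<bullet> x))
          * (4 * (\<Sum>\<beta>\<in>UNIV. (v \<bullet> e \<beta>)\<^sup>2) - (v \<bullet> v) * (\<Sum>\<beta>\<in>UNIV. e \<beta> \<bullet> e \<beta>))"
      by (simp only: SSU_term_paraboloid_immersion[OF h] sum_subtractf sum_distrib_left[symmetric])
    also have "\<dots> < 0"
      using paraboloid_frame_SSU_inequality[OF frame \<open>v \<noteq> 0\<close> assms]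
      by (intro mult_pos_neg) (auto simp: add_pos_nonneg)
    finally show ?thesis .
  qed
  with isometric_paraboloid_immersion[OF h] show ?thesis
    unfolding Phi_SSU_def by blast
qed

theorem corollary5p1:
  shows "Phi_SSU (paraboloid_metric :: real^'n \<Rightarrow> real^'n \<Rightarrow> real^'n \<Rightarrow> real) \<longleftrightarrow> CARD('n) > 4"
proof
  assume "Phi_SSU (paraboloid_metric :: real^'n \<Rightarrow> real^'n \<Rightarrow> real^'n \<Rightarrow> real)"
  moreover have "orthonormal_frame paraboloid_metric 0 (\<lambda>i. axis i 1 :: real^'n)"
    by (simp add: orthonormal_frame_def paraboloid_metric_def inner_axis_axis)
  ultimately show "CARD('n) > 4" by (rule Phi_SSU_imp_card_gt_4)
next
  assume "CARD('n) > 4"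
  then show "Phi_SSU (paraboloid_metric :: real^'n \<Rightarrow> real^'n \<Rightarrow> real^'n \<Rightarrow> real)"
    by (rule Phi_SSU_paraboloid_metric)
qed

end
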